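(* Let ${\bold k}$ be an algebraically closed field of characteristic $p\ge3$. Then $(R_p\otimes{\bf Lie}_p)_{S_p}\cong{\bold k}$, i.e. the space of $S_p$-coinvariants of $R_p\otimes{\bf Lie}_p$ is one-dimensional.
   Context: ${\bf Lie}_p$ is the $S_p$-representation over ${\bold k}$ given by the arity-$p$ component of the Lie operad (the span of multilinear Lie monomials in $x_1,\dots,x_p$ in the free Lie algebra over ${\bold k}$). $R_p$ is the $(p-2)$-dimensional irreducible ${\bold k}S_p$-module of functions on $\{1,\dots,p\}$ with zero sum of values, modulo constant functions. *)

theory Defs
  imports "HOL-Computational_Algebra.Polynomial" "HOL-Combinatorics.Permutations" "HOL-Library.Function_Algebras"
begin

definition fscale :: "'k::field \<Rightarrow> ('x \<Rightarrow> 'k) \<Rightarrow> ('x \<Rightarrow> 'k)" where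
  "fscale c f = (\<lambda>x. c * f x)"

definition fspan :: "('x \<Rightarrow> 'k::field) set \<Rightarrow> ('x \<Rightarrow> 'k) set" where
  "fspan S = module.span fscale S"

definition fdim :: "('x \<Rightarrow> 'k::field) set \<Rightarrow> nat" where
  "fdim S = vector_space.dim fscale S"

definition alg_closed :: "'k::field itself \<Rightarrow> bool" where
  "alg_closed _ \<longleftrightarrow> (\<forall>q :: 'k poly. degree q > 0 \<longrightarrow> (\<exists>x. poly q x = 0))"

text \<open>Free associative algebra over k on generators x_i (i :: nat): noncommutative
  polynomials, represented as coefficient functions on words (nat lists).\<close>
definition wmult :: "(nat list \<Rightarrow> 'k::field) \<Rightarrow> (nat list \<Rightarrow> 'k) \<Rightarrow> nat list \<Rightarrow> 'k" where
  "wmult f g w = (\<Sum>i\<le>length w. f (take i w) * g (drop i w))"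

definition wgen :: "nat \<Rightarrow> nat list \<Rightarrow> 'k::field" where
  "wgen i w = (if w = [i] then 1 else 0)"

definition wbracket :: "(nat list \<Rightarrow> 'k::field) \<Rightarrow> (nat list \<Rightarrow> 'k) \<Rightarrow> nat list \<Rightarrow> 'k" where
  "wbracket f g = (\<lambda>w. wmult f g w - wmult g f w)"

text \<open>Multilinear Lie monomials: bracket expressions in which each generator x_i,
  i in A, occurs exactly once (realized inside the free associative algebra,
  which contains the free Lie algebra as the Lie subalgebra generated by the x_i).\<close>
inductive lie_mono :: "nat set \<Rightarrow> (nat list \<Rightarrow> 'k::field) \<Rightarrow> bool" where
  gen: "lie_mono {i} (wgen i)"
| br: "lie_mono A f \<Longrightarrow> lie_mono B g \<Longrightarrow> A \<inter> B = {} \<Longrightarrow> lie_mono (A \<union> B) (wbracket f g)"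

definition LieOp :: "nat \<Rightarrow> (nat list \<Rightarrow> 'k::field) set" where
  "LieOp p = fspan {f. lie_mono {1..p} f}"

text \<open>Zero-sum functions on {1..p} and constant functions on {1..p}
  (extended by 0 outside); R_p = RZ p / RC p.\<close>
definition RZ :: "nat \<Rightarrow> (nat \<Rightarrow> 'k::field) set" where
  "RZ p = {z. (\<forall>i. i \<notin> {1..p} \<longrightarrow> z i = 0) \<and> sum z {1..p} = 0}"

definition RC :: "nat \<Rightarrow> (nat \<Rightarrow> 'k::field) set" where
  "RC p = {z. \<exists>c. \<forall>i. z i = (if i \<in> {1..p} then c else 0)}"

text \<open>Tensor products of function spaces realized inside functions on the product.\<close>
definition ftensor :: "(nat \<Rightarrow> 'k::field) set \<Rightarrow> (nat list \<Rightarrow> 'k) set \<Rightarrow> (nat \<times> nat list \<Rightarrow> 'k) set" where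
  "ftensor Z L = fspan {(\<lambda>(i, w). z i * l w) | z l. z \<in> Z \<and> l \<in> L}"

definition tact :: "(nat \<Rightarrow> nat) \<Rightarrow> (nat \<times> nat list \<Rightarrow> 'k) \<Rightarrow> (nat \<times> nat list \<Rightarrow> 'k)" where
  "tact \<sigma> t = (\<lambda>(i, w). t (\<sigma> i, map \<sigma> w))"

text \<open>R_p tensor Lie_p = (RZ tensor Lie_p) / (RC tensor Lie_p); its S_p-coinvariants are
  the quotient of RZ tensor Lie_p by the subspace coinv_rel p.\<close>
definition coinv_rel :: "nat \<Rightarrow> (nat \<times> nat list \<Rightarrow> 'k::field) set" where
  "coinv_rel p = fspan (ftensor (RC p) (LieOp p) \<union>
     {(\<lambda>x. tact \<sigma> t x - t x) | \<sigma> t. \<sigma> permutes {1..p} \<and> t \<in> ftensor (RZ p) (LieOp p)})"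

definition coinv_dim :: "'k::field itself \<Rightarrow> nat \<Rightarrow> nat" where
  "coinv_dim _ p = fdim (ftensor (RZ p) (LieOp p) :: (nat \<times> nat list \<Rightarrow> 'k) set)
                   - fdim (coinv_rel p :: (nat \<times> nat list \<Rightarrow> 'k) set)"

end

theory Submission
  imports Defs "HOL-Library.Indicator_Function"
begin

text \<open>
  Lie_p is spanned by the left-normed brackets [..[x_c1, x_c2], .., x_cp], c running over the
  arrangements of 1..p, and S_p permutes them transitively. Hence modulo the coinvariant
  relations every tensor reduces to z (x) b with b = [..[x_1, x_2], .., x_p]. The transposition
  (1 2) negates b, so, 2 being invertible, z (x) b is a relation whenever z_1 = z_2; what remains
  is the line spanned by e_12 (x) b, where e_12 = delta_1 - delta_2.
  Conversely the functional t |-> sum_w t(w_1, w), over all words w of length p, is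
  S_p-invariant, vanishes on constants (x) Lie_p because the coefficient sum of a Lie polynomial
  of degree at least 2 is zero, and takes the value 2 on e_12 (x) b. As p = 0 in k the constants
  have zero sum, so all relations lie in the finite-dimensional space RZ (x) Lie_p, and the
  quotient is one-dimensional.
\<close>

interpretation fv: vector_space "fscale :: 'k::field \<Rightarrow> ('x \<Rightarrow> 'k) \<Rightarrow> ('x \<Rightarrow> 'k)"
  by unfold_locales (auto simp: fscale_def fun_eq_iff algebra_simps)

lemma fspan_eq_span: "fspan S = fv.span S"
  by (simp add: fspan_def)

lemma fspan_base: "x \<in> S \<Longrightarrow> x \<in> fspan S"
  by (simp add: fspan_def fv.span_base)

lemma fspan_add: "x \<in> fspan S \<Longrightarrow> y \<in> fspan S \<Longrightarrow> x + y \<in> fspan S"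
  by (simp add: fspan_def fv.span_add)

lemma fspan_diff: "x \<in> fspan S \<Longrightarrow> y \<in> fspan S \<Longrightarrow> x - y \<in> fspan S"
  by (simp add: fspan_def fv.span_diff)

lemma fspan_scale: "x \<in> fspan S \<Longrightarrow> fscale c x \<in> fspan S"
  by (simp add: fspan_def fv.span_scale)

lemma fspan_mono: "S \<subseteq> T \<Longrightarrow> fspan S \<subseteq> fspan T"
  by (simp add: fspan_def fv.span_mono)

lemma fspan_minimal: "S \<subseteq> fspan T \<Longrightarrow> fspan S \<subseteq> fspan T"
  by (simp add: fspan_def fv.span_minimal)

lemma fspan_linear_image:
  fixes h :: "('x \<Rightarrow> 'k::field) \<Rightarrow> ('y \<Rightarrow> 'k)"
  assumes add: "\<And>x y. h (x + y) = h x + h y"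
    and scale: "\<And>c x. h (fscale c x) = fscale c (h x)"
    and x: "x \<in> fspan S"
    and S: "\<And>s. s \<in> S \<Longrightarrow> h s \<in> fspan T"
  shows "h x \<in> fspan T"
proof -
  have "h 0 = 0" using add[of 0 0] by simp
  then have "fv.subspace {x. h x \<in> fspan T}"
    unfolding fv.subspace_def using add scale by (auto simp: fspan_eq_span fv.span_zero fv.span_add fv.span_scale)
  then show ?thesis
    using fv.span_induct[OF x[unfolded fspan_eq_span], of "\<lambda>x. h x \<in> fspan T"] S by auto
qed

lemma linear_functional_eq_0_on_fspan:
  fixes \<phi> :: "('x \<Rightarrow> 'k::field) \<Rightarrow> 'k"
  assumes add: "\<And>x y. \<phi> (x + y) = \<phi> x + \<phi> y"
    and scale: "\<And>c x. \<phi> (fscale c x) = c * \<phi> x"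
    and x: "x \<in> fspan S"
    and S: "\<And>s. s \<in> S \<Longrightarrow> \<phi> s = 0"
  shows "\<phi> x = 0"
proof -
  have "\<phi> 0 = 0" using scale[of 0 0] by (simp add: fscale_def zero_fun_def)
  then have "fv.subspace {x. \<phi> x = 0}"
    unfolding fv.subspace_def using add scale by auto
  then show ?thesis
    using fv.span_induct[OF x[unfolded fspan_eq_span], of "\<lambda>x. \<phi> x = 0"] S by auto
qed

lemma fspan_vanishes_outside:
  fixes x :: "'x \<Rightarrow> 'k::field"
  assumes x: "x \<in> fspan S" and S: "\<And>s y. s \<in> S \<Longrightarrow> y \<notin> D \<Longrightarrow> s y = 0"
    and y: "y \<notin> D"
  shows "x y = 0"
proof -
  have "fv.subspace {x :: 'x \<Rightarrow> 'k. \<forall>y. y \<notin> D \<longrightarrow> x y = 0}"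
    unfolding fv.subspace_def by (auto simp: fscale_def)
  then show ?thesis
    using fv.span_induct[OF x[unfolded fspan_eq_span], of "\<lambda>x. \<forall>y. y \<notin> D \<longrightarrow> x y = 0"] S y
    by auto
qed

lemma finite_support_in_fspan:
  fixes f :: "'x \<Rightarrow> 'k::field"
  assumes "finite D" "\<And>y. y \<notin> D \<Longrightarrow> f y = 0"
  shows "f \<in> fspan ((\<lambda>x. indicator {x}) ` D)"
  using assms
proof (induction D arbitrary: f rule: finite_induct)
  case empty
  then have "f = 0" by (simp add: fun_eq_iff)
  then show ?case using fv.span_zero unfolding fspan_eq_span by blast
next
  case (insert x D)
  define g where "g = f - fscale (f x) (indicator {x})"
  have "g \<in> fspan ((\<lambda>x. indicator {x}) ` D)"
    using insert.prems insert.hyps by (intro insert.IH) (auto simp: g_def fscale_def indicator_def)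
  moreover have "fspan ((\<lambda>x. indicator {x}) ` D) \<subseteq> fspan ((\<lambda>x. indicator {x}) ` insert x D)"
    by (intro fspan_mono image_mono) auto
  ultimately have "g \<in> fspan ((\<lambda>x. indicator {x}) ` insert x D)"
    by blast
  moreover have "fscale (f x) (indicator {x}) \<in> fspan ((\<lambda>x. indicator {x}) ` insert x D)"
    by (intro fspan_scale fspan_base) auto
  ultimately have "g + fscale (f x) (indicator {x}) \<in> fspan ((\<lambda>x. indicator {x}) ` insert x D)"
    by (rule fspan_add)
  then show ?case
    by (simp add: g_def)
qed

lemma (in vector_space) dim_eq_Suc_dim_if_span_insert:
  assumes "finite F" "V \<subseteq> span F" "W \<subseteq> V" "x \<in> V" "x \<notin> span W" "V \<subseteq> span (insert x W)"
  shows "dim V = Suc (dim W)"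
proof -
  obtain B where B: "B \<subseteq> W" "independent B" "W \<subseteq> span B" "card B = dim W"
    using basis_exists by blast
  have "B \<subseteq> span F"
    using B(1) assms(2,3) by blast
  then have "finite B"
    using independent_span_bound[OF \<open>finite F\<close> B(2)] by simp
  have "x \<notin> span B"
    using span_mono[OF B(1)] assms(5) by blast
  show ?thesis
  proof (rule dim_unique)
    show "insert x B \<subseteq> V" using B(1) assms(3,4) by blast
    have "W \<subseteq> span (insert x B)"
      using B(3) span_mono[of B "insert x B"] by blast
    then have "span (insert x W) \<subseteq> span (insert x B)"
      by (intro span_minimal subspace_span) (simp add: span_base)
    with assms(6) show "V \<subseteq> span (insert x B)"
      by (rule subset_trans)
    show "independent (insert x B)"
      by (rule independent_insertI[OF \<open>x \<notin> span B\<close> B(2)])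
    have "x \<notin> B" using \<open>x \<notin> span B\<close> span_base by blast
    then show "card (insert x B) = Suc (dim W)"
      using \<open>finite B\<close> B(4) by simp
  qed
qed

subsection \<open>The free associative algebra\<close>

lemma wmult_add_left: "wmult (f + g) h = wmult f h + wmult g h"
  by (simp add: wmult_def fun_eq_iff sum.distrib algebra_simps)

lemma wmult_add_right: "wmult h (f + g) = wmult h f + wmult h g"
  by (simp add: wmult_def fun_eq_iff sum.distrib algebra_simps)

lemma wmult_diff_left: "wmult (f - g) h = wmult f h - wmult g h"
  by (simp add: wmult_def fun_eq_iff sum_subtractf algebra_simps)

lemma wmult_diff_right: "wmult h (f - g) = wmult h f - wmult h g"
  by (simp add: wmult_def fun_eq_iff sum_subtractf algebra_simps)

lemma wmult_scale_left: "wmult (fscale c f) h = fscale c (wmult f h)"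
  by (simp add: wmult_def fun_eq_iff fscale_def sum_distrib_left algebra_simps)

lemma wmult_scale_right: "wmult h (fscale c f) = fscale c (wmult h f)"
  by (simp add: wmult_def fun_eq_iff fscale_def sum_distrib_left algebra_simps)

lemma wbracket_eq: "wbracket f g = wmult f g - wmult g f"
  by (simp add: wbracket_def fun_eq_iff)

lemma wbracket_add_left: "wbracket (f + g) h = wbracket f h + wbracket g h"
  by (simp add: wbracket_eq wmult_add_left wmult_add_right)

lemma wbracket_add_right: "wbracket h (f + g) = wbracket h f + wbracket h g"
  by (simp add: wbracket_eq wmult_add_left wmult_add_right)

lemma wbracket_scale_left: "wbracket (fscale c f) h = fscale c (wbracket f h)"
  unfolding wbracket_eq wmult_scale_left wmult_scale_right by (simp add: fscale_def fun_eq_iff algebra_simps)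

lemma wbracket_scale_right: "wbracket h (fscale c f) = fscale c (wbracket h f)"
  unfolding wbracket_eq wmult_scale_left wmult_scale_right by (simp add: fscale_def fun_eq_iff algebra_simps)

lemma wbracket_antisym: "wbracket g f = - wbracket f g"
  by (simp add: wbracket_eq)

lemma wbracket_uminus_left: "wbracket (- f) h = - wbracket f h"
  by (simp add: wbracket_def wmult_def fun_eq_iff sum_negf)

definition homogeneous :: "nat \<Rightarrow> (nat list \<Rightarrow> 'k::zero) \<Rightarrow> bool" where
  "homogeneous n f \<longleftrightarrow> (\<forall>w. f w \<noteq> 0 \<longrightarrow> length w = n)"

lemma homogeneous_wgen: "homogeneous 1 (wgen i)"
  by (simp add: homogeneous_def wgen_def)

lemma wmult_homogeneous_left:
  assumes "homogeneous a f"
  shows "wmult f g w = (if a \<le> length w then f (take a w) * g (drop a w) else 0)"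
proof -
  have "wmult f g w = (\<Sum>i\<le>length w. if i = a then f (take a w) * g (drop a w) else 0)"
    unfolding wmult_def
  proof (rule sum.cong)
    fix i assume "i \<in> {..length w}"
    then have "length (take i w) = i" by simp
    then show "f (take i w) * g (drop i w) = (if i = a then f (take a w) * g (drop a w) else 0)"
      using assms unfolding homogeneous_def by (cases "i = a") auto
  qed simp
  then show ?thesis
    by (simp add: sum.delta' atMost_iff)
qed

lemma homogeneous_wmult:
  assumes f: "homogeneous a f" and g: "homogeneous b g"
  shows "homogeneous (a + b) (wmult f g)"
  unfolding homogeneous_def
proof (intro allI impI)
  fix w assume "wmult f g w \<noteq> 0"
  then have "a \<le> length w" "g (drop a w) \<noteq> 0"
    by (auto simp: wmult_homogeneous_left[OF f] split: if_splits)
  with g show "length w = a + b"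
    unfolding homogeneous_def by fastforce
qed

lemma homogeneous_wbracket:
  assumes "homogeneous a f" "homogeneous b g"
  shows "homogeneous (a + b) (wbracket f g)"
proof -
  have "homogeneous (a + b) (wmult f g)" "homogeneous (a + b) (wmult g f)"
    using homogeneous_wmult[OF assms] homogeneous_wmult[OF assms(2,1)] by (simp_all add: add.commute)
  then show ?thesis
    unfolding homogeneous_def wbracket_def by (metis diff_self)
qed

text \<open>Associativity is only needed for homogeneous factors, where it is a statement about a
  single splitting of each word.\<close>

lemma wmult_assoc_homogeneous:
  assumes f: "homogeneous a f" and g: "homogeneous b g" and "homogeneous c h"
  shows "wmult (wmult f g) h = wmult f (wmult g h)"
proof
  fix w
  have fg: "homogeneous (a + b) (wmult f g)" using homogeneous_wmult[OF f g] .
  show "wmult (wmult f g) h w = wmult f (wmult g h) w"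
  proof (cases "a + b \<le> length w")
    case True
    have "take a (take (a + b) w) = take a w" "drop a (take (a + b) w) = take b (drop a w)"
      "drop (a + b) w = drop b (drop a w)"
      by (simp_all add: min_def drop_take add.commute)
    with True show ?thesis
      unfolding wmult_homogeneous_left[OF fg, of h w] wmult_homogeneous_left[OF f, of "wmult g h" w]
        wmult_homogeneous_left[OF f, of g "take (a + b) w"] wmult_homogeneous_left[OF g, of h "drop a w"]
      by simp
  next
    case False
    then show ?thesis
      unfolding wmult_homogeneous_left[OF fg, of h w] wmult_homogeneous_left[OF f, of "wmult g h" w]
        wmult_homogeneous_left[OF g, of h "drop a w"]
      by auto
  qed
qed

lemma wbracket_jacobi_homogeneous:
  assumes "homogeneous a u" "homogeneous b v" "homogeneous c x"
  shows "wbracket u (wbracket v x) = wbracket (wbracket u v) x - wbracket (wbracket u x) v"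
  using wmult_assoc_homogeneous[OF assms(1) assms(2) assms(3)]
    wmult_assoc_homogeneous[OF assms(1) assms(3) assms(2)]
    wmult_assoc_homogeneous[OF assms(2) assms(1) assms(3)]
    wmult_assoc_homogeneous[OF assms(2) assms(3) assms(1)]
    wmult_assoc_homogeneous[OF assms(3) assms(1) assms(2)]
    wmult_assoc_homogeneous[OF assms(3) assms(2) assms(1)]
  by (simp add: wbracket_eq wmult_diff_left wmult_diff_right)

definition letters_in :: "nat set \<Rightarrow> (nat list \<Rightarrow> 'k::zero) \<Rightarrow> bool" where
  "letters_in A f \<longleftrightarrow> (\<forall>w. f w \<noteq> 0 \<longrightarrow> set w \<subseteq> A)"

lemma letters_in_wgen: "i \<in> A \<Longrightarrow> letters_in A (wgen i)"
  by (simp add: letters_in_def wgen_def)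

lemma letters_in_wmult:
  assumes f: "letters_in A f" and g: "letters_in A g"
  shows "letters_in A (wmult f g)"
  unfolding letters_in_def
proof (intro allI impI)
  fix w assume "wmult f g w \<noteq> 0"
  then obtain i where "i \<le> length w" "f (take i w) * g (drop i w) \<noteq> 0"
    unfolding wmult_def by (metis (no_types, lifting) atMost_iff sum.neutral)
  then have "set (take i w) \<subseteq> A" "set (drop i w) \<subseteq> A"
    using f g unfolding letters_in_def by auto
  then show "set w \<subseteq> A"
    by (metis append_take_drop_id set_append Un_subset_iff)
qed

lemma letters_in_wbracket: "letters_in A f \<Longrightarrow> letters_in A g \<Longrightarrow> letters_in A (wbracket f g)"
  using letters_in_wmult[of A f g] letters_in_wmult[of A g f]
  unfolding letters_in_def wbracket_def by (metis diff_self)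

lemma wgen_map: "inj \<tau> \<Longrightarrow> wgen (\<tau> a) (map \<tau> w) = wgen a w"
  by (auto simp: wgen_def inj_eq map_eq_Cons_conv)

lemma wbracket_map:
  "wbracket f g (map \<tau> w) = wbracket (\<lambda>u. f (map \<tau> u)) (\<lambda>u. g (map \<tau> u)) w"
  by (simp add: wbracket_def wmult_def take_map drop_map)

subsection \<open>Left-normed brackets\<close>

definition left_normed :: "nat list \<Rightarrow> nat list \<Rightarrow> 'k::field" where
  "left_normed c = (case c of [] \<Rightarrow> 0 | a # c' \<Rightarrow> foldl (\<lambda>f x. wbracket f (wgen x)) (wgen a) c')"

lemma left_normed_single: "left_normed [a] = wgen a"
  by (simp add: left_normed_def)

lemma left_normed_snoc: "c \<noteq> [] \<Longrightarrow> left_normed (c @ [x]) = wbracket (left_normed c) (wgen x)"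
  by (cases c) (simp_all add: left_normed_def)

lemma left_normed_swap: "(left_normed (b # a # r) :: nat list \<Rightarrow> 'k::field) = - left_normed (a # b # r)"
proof (induction r rule: rev_induct)
  case Nil
  show ?case by (simp add: left_normed_def wbracket_antisym[of "wgen b"])
next
  case (snoc x r)
  have "(left_normed ((b # a # r) @ [x]) :: nat list \<Rightarrow> 'k) = wbracket (left_normed (b # a # r)) (wgen x)"
    by (rule left_normed_snoc) simp
  also have "\<dots> = - wbracket (left_normed (a # b # r) :: nat list \<Rightarrow> 'k) (wgen x)"
    unfolding snoc by (rule wbracket_uminus_left)
  also have "\<dots> = - left_normed ((a # b # r) @ [x])"
    by (subst left_normed_snoc) simp_all
  finally show ?case by simp
qed

lemma homogeneous_left_normed:
  "c \<noteq> [] \<Longrightarrow> homogeneous (length c) (left_normed c :: nat list \<Rightarrow> 'k::field)"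
proof (induction c rule: rev_nonempty_induct)
  case (single x)
  show ?case using homogeneous_wgen[of x] by (simp add: left_normed_single One_nat_def)
next
  case (snoc x c)
  then show ?case
    using homogeneous_wbracket[OF snoc.IH homogeneous_wgen[of x]] by (simp add: left_normed_snoc)
qed

lemma letters_in_left_normed: "c \<noteq> [] \<Longrightarrow> set c \<subseteq> A \<Longrightarrow> letters_in A (left_normed c)"
  by (induction c rule: rev_nonempty_induct)
    (simp_all add: left_normed_single left_normed_snoc letters_in_wgen letters_in_wbracket)

lemma left_normed_map:
  assumes "inj \<tau>" and "c \<noteq> []"
  shows "(\<lambda>w. left_normed (map \<tau> c) (map \<tau> w)) = left_normed c"
  using \<open>c \<noteq> []\<close>
proof (induction c rule: rev_nonempty_induct)
  case (single x)
  show ?case using assms(1) by (simp add: left_normed_single wgen_map)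
next
  case (snoc x c)
  then show ?case
    using assms(1) by (simp add: left_normed_snoc wbracket_map wgen_map)
qed

lemma lie_mono_left_normed:
  "c \<noteq> [] \<Longrightarrow> distinct c \<Longrightarrow> lie_mono (set c) (left_normed c :: nat list \<Rightarrow> 'k::field)"
proof (induction c rule: rev_nonempty_induct)
  case (single x)
  show ?case by (simp add: left_normed_single lie_mono.gen)
next
  case (snoc x c)
  then have "lie_mono (set c \<union> {x}) (wbracket (left_normed c :: nat list \<Rightarrow> 'k) (wgen x))"
    by (intro lie_mono.br lie_mono.gen) auto
  with snoc.hyps show ?case by (simp add: left_normed_snoc)
qed

definition left_normed_brackets :: "nat set \<Rightarrow> (nat list \<Rightarrow> 'k::field) set" where
  "left_normed_brackets A = {left_normed c | c. c \<noteq> [] \<and> distinct c \<and> set c = A}"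

lemma left_normed_bracketsI:
  "c \<noteq> [] \<Longrightarrow> distinct c \<Longrightarrow> set c = A \<Longrightarrow> left_normed c \<in> left_normed_brackets A"
  unfolding left_normed_brackets_def by blast

lemma left_normed_bracketsE:
  assumes "s \<in> left_normed_brackets A"
  obtains c where "s = left_normed c" "c \<noteq> []" "distinct c" "set c = A"
  using assms unfolding left_normed_brackets_def by blast

lemma wbracket_wgen_in_span:
  fixes h :: "nat list \<Rightarrow> 'k::field"
  assumes h: "h \<in> fspan (left_normed_brackets A)" and x: "x \<notin> A"
  shows "wbracket h (wgen x) \<in> fspan (left_normed_brackets (insert x A))"
proof (rule fspan_linear_image[OF wbracket_add_left wbracket_scale_left h])
  fix s :: "nat list \<Rightarrow> 'k" assume "s \<in> left_normed_brackets A"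
  then obtain c where c: "s = left_normed c" "c \<noteq> []" "distinct c" "set c = A"
    by (rule left_normed_bracketsE)
  then have "(left_normed (c @ [x]) :: nat list \<Rightarrow> 'k) \<in> left_normed_brackets (insert x A)"
    using x by (intro left_normed_bracketsI) auto
  with c show "wbracket s (wgen x) \<in> fspan (left_normed_brackets (insert x A))"
    by (simp add: left_normed_snoc fspan_base)
qed

text \<open>The Jacobi identity rewrites a bracket of two left-normed brackets into left-normed
  brackets, by induction on the length of the right factor.\<close>

lemma wbracket_left_normed_in_span:
  "d \<noteq> [] \<Longrightarrow> c \<noteq> [] \<Longrightarrow> distinct (c @ d) \<Longrightarrow>
    wbracket (left_normed c) (left_normed d :: nat list \<Rightarrow> 'k::field)
      \<in> fspan (left_normed_brackets (set c \<union> set d))"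
proof (induction d arbitrary: c rule: rev_nonempty_induct)
  case (single x)
  then have "(left_normed (c @ [x]) :: nat list \<Rightarrow> 'k) \<in> left_normed_brackets (set c \<union> set [x])"
    by (intro left_normed_bracketsI) auto
  with single.prems show ?case
    by (simp add: left_normed_single left_normed_snoc fspan_base)
next
  case (snoc x d)
  have jacobi: "wbracket (left_normed c) (left_normed (d @ [x]) :: nat list \<Rightarrow> 'k) =
      wbracket (wbracket (left_normed c) (left_normed d)) (wgen x)
      - wbracket (left_normed (c @ [x])) (left_normed d)"
    using wbracket_jacobi_homogeneous[OF homogeneous_left_normed[OF snoc.prems(1)]
        homogeneous_left_normed[OF snoc.hyps] homogeneous_wgen[of x]] snoc.hyps snoc.prems(1)
    by (simp add: left_normed_snoc)
  have "wbracket (left_normed c) (left_normed d :: nat list \<Rightarrow> 'k) \<in> fspan (left_normed_brackets (set c \<union> set d))"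
    using snoc.IH[OF snoc.prems(1)] snoc.prems(2) by simp
  then have "wbracket (wbracket (left_normed c) (left_normed d :: nat list \<Rightarrow> 'k)) (wgen x)
      \<in> fspan (left_normed_brackets (insert x (set c \<union> set d)))"
    by (rule wbracket_wgen_in_span) (use snoc.prems(2) in auto)
  then have outer: "wbracket (wbracket (left_normed c) (left_normed d :: nat list \<Rightarrow> 'k)) (wgen x)
      \<in> fspan (left_normed_brackets (set c \<union> set (d @ [x])))"
    by simp
  have inner: "wbracket (left_normed (c @ [x])) (left_normed d :: nat list \<Rightarrow> 'k)
      \<in> fspan (left_normed_brackets (set c \<union> set (d @ [x])))"
    using snoc.IH[of "c @ [x]"] snoc.prems(2) by simp
  show ?case
    unfolding jacobi by (rule fspan_diff[OF outer inner])
qed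

lemma lie_mono_in_span:
  "lie_mono A f \<Longrightarrow> (f :: nat list \<Rightarrow> 'k::field) \<in> fspan (left_normed_brackets A)"
proof (induction rule: lie_mono.induct)
  case (gen i)
  have "(left_normed [i] :: nat list \<Rightarrow> 'k) \<in> left_normed_brackets {i}"
    by (intro left_normed_bracketsI) auto
  then show ?case by (simp add: left_normed_single fspan_base)
next
  case (br A f B g)
  have f_bracket: "wbracket f (left_normed d) \<in> fspan (left_normed_brackets (A \<union> B))"
    if d: "d \<noteq> []" "distinct d" "set d = B" for d
  proof (rule fspan_linear_image[OF wbracket_add_left wbracket_scale_left br.IH(1)])
    fix s :: "nat list \<Rightarrow> 'k" assume "s \<in> left_normed_brackets A"
    then obtain c where c: "s = left_normed c" "c \<noteq> []" "distinct c" "set c = A"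
      by (rule left_normed_bracketsE)
    then show "wbracket s (left_normed d) \<in> fspan (left_normed_brackets (A \<union> B))"
      using wbracket_left_normed_in_span[OF d(1) c(2)] d br.hyps(3) by auto
  qed
  show ?case
  proof (rule fspan_linear_image[OF wbracket_add_right wbracket_scale_right br.IH(2)])
    fix s :: "nat list \<Rightarrow> 'k" assume "s \<in> left_normed_brackets B"
    then show "wbracket f s \<in> fspan (left_normed_brackets (A \<union> B))"
      using f_bracket by (auto elim: left_normed_bracketsE)
  qed
qed

lemma LieOp_eq_span_left_normed:
  "(LieOp p :: (nat list \<Rightarrow> 'k::field) set) = fspan (left_normed_brackets {1..p})"
proof (rule subset_antisym)
  show "LieOp p \<subseteq> (fspan (left_normed_brackets {1..p}) :: (nat list \<Rightarrow> 'k) set)"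
    unfolding LieOp_def by (rule fspan_minimal) (auto intro: lie_mono_in_span)
  show "fspan (left_normed_brackets {1..p}) \<subseteq> (LieOp p :: (nat list \<Rightarrow> 'k) set)"
    unfolding LieOp_def
  proof (rule fspan_mono, rule subsetI)
    fix f :: "nat list \<Rightarrow> 'k" assume "f \<in> left_normed_brackets {1..p}"
    then obtain c where "f = left_normed c" "c \<noteq> []" "distinct c" "set c = {1..p}"
      by (rule left_normed_bracketsE)
    then show "f \<in> {f. lie_mono {1..p} f}"
      using lie_mono_left_normed[of c] by simp
  qed
qed

lemma left_normed_in_LieOp:
  "c \<noteq> [] \<Longrightarrow> distinct c \<Longrightarrow> set c = {1..p} \<Longrightarrow>
    (left_normed c :: nat list \<Rightarrow> 'k::field) \<in> LieOp p"
  unfolding LieOp_eq_span_left_normed by (intro fspan_base left_normed_bracketsI)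

subsection \<open>Tensors and the symmetric group action\<close>

definition tensor :: "(nat \<Rightarrow> 'k::field) \<Rightarrow> (nat list \<Rightarrow> 'k) \<Rightarrow> nat \<times> nat list \<Rightarrow> 'k" where
  "tensor z l = (\<lambda>(i, w). z i * l w)"

lemma ftensor_eq_span_tensor: "ftensor Z L = fspan {tensor z l | z l. z \<in> Z \<and> l \<in> L}"
  by (simp add: ftensor_def tensor_def)

lemma tensor_in_ftensor: "z \<in> Z \<Longrightarrow> l \<in> L \<Longrightarrow> tensor z l \<in> ftensor Z L"
  unfolding ftensor_eq_span_tensor by (rule fspan_base) blast

lemma ftensor_diff: "s \<in> ftensor Z L \<Longrightarrow> t \<in> ftensor Z L \<Longrightarrow> s - t \<in> ftensor Z L"
  unfolding ftensor_def by (rule fspan_diff)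

lemma fspan_ftensor: "fspan (ftensor Z L) = ftensor Z L"
  by (simp add: ftensor_def fspan_def fv.span_span)

lemma tensor_add_right: "tensor z (l1 + l2) = tensor z l1 + tensor z l2"
  by (simp add: tensor_def fun_eq_iff algebra_simps)

lemma tensor_scale_right: "tensor z (fscale c l) = fscale c (tensor z l)"
  by (simp add: tensor_def fscale_def fun_eq_iff algebra_simps)

lemma tensor_uminus_right: "tensor z (- l) = - tensor z l"
  by (simp add: tensor_def fun_eq_iff)

lemma tact_tensor: "tact \<sigma> (tensor z l) = tensor (z \<circ> \<sigma>) (\<lambda>w. l (map \<sigma> w))"
  by (simp add: tact_def tensor_def fun_eq_iff)

lemma tact_add: "tact \<sigma> (s + t) = tact \<sigma> s + tact \<sigma> t"
  by (simp add: tact_def fun_eq_iff split: prod.splits)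

lemma tact_scale: "tact \<sigma> (fscale c t) = fscale c (tact \<sigma> t)"
  by (simp add: tact_def fscale_def fun_eq_iff split: prod.splits)

lemma LieOp_relabel:
  assumes \<sigma>: "\<sigma> permutes {1..p}" and l: "l \<in> (LieOp p :: (nat list \<Rightarrow> 'k::field) set)"
  shows "(\<lambda>w. l (map \<sigma> w)) \<in> LieOp p"
  unfolding LieOp_eq_span_left_normed
proof (rule fspan_linear_image[where h = "\<lambda>l w. l (map \<sigma> w)"])
  show "l \<in> fspan (left_normed_brackets {1..p})"
    using l by (simp add: LieOp_eq_span_left_normed)
  fix s :: "nat list \<Rightarrow> 'k" assume "s \<in> left_normed_brackets {1..p}"
  then obtain c where c: "s = left_normed c" "c \<noteq> []" "distinct c" "set c = {1..p}"
    by (rule left_normed_bracketsE)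
  define d where "d = map (inv \<sigma>) c"
  have "map \<sigma> d = c"
    unfolding d_def using permutes_inverses(1)[OF \<sigma>] by (simp add: map_idI)
  then have "(\<lambda>w. s (map \<sigma> w)) = left_normed d"
    using left_normed_map[OF permutes_inj[OF \<sigma>], of d] c(1,2) by (auto simp: d_def)
  moreover have "left_normed d \<in> (left_normed_brackets {1..p} :: (nat list \<Rightarrow> 'k) set)"
  proof (rule left_normed_bracketsI)
    show "d \<noteq> []" using c(2) by (simp add: d_def)
    show "distinct d"
      unfolding d_def using c(3) permutes_inj[OF permutes_inv[OF \<sigma>]]
      by (simp add: distinct_map inj_on_subset[of _ UNIV])
    show "set d = {1..p}"
      unfolding d_def using c(4) permutes_image[OF permutes_inv[OF \<sigma>]] by simp
  qed
  ultimately show "(\<lambda>w. s (map \<sigma> w)) \<in> fspan (left_normed_brackets {1..p})"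
    by (simp add: fspan_base)
qed (simp_all add: fun_eq_iff fscale_def)

lemma RZ_comp_permutes:
  assumes \<sigma>: "\<sigma> permutes {1..p}" and z: "z \<in> RZ p"
  shows "z \<circ> \<sigma> \<in> RZ p"
proof -
  have "sum (z \<circ> \<sigma>) {1..p} = sum z {1..p}"
    using sum.permute[OF \<sigma>, of z] by simp
  then show ?thesis
    using z permutes_not_in[OF \<sigma>] by (simp add: RZ_def)
qed

lemma tact_in_ftensor:
  assumes \<sigma>: "\<sigma> permutes {1..p}"
    and t: "t \<in> (ftensor (RZ p) (LieOp p) :: (nat \<times> nat list \<Rightarrow> 'k::field) set)"
  shows "tact \<sigma> t \<in> ftensor (RZ p) (LieOp p)"
  using t unfolding ftensor_eq_span_tensor
proof (rule fspan_linear_image[OF tact_add tact_scale])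
  fix s assume "s \<in> {tensor z l | z l. z \<in> (RZ p :: (nat \<Rightarrow> 'k) set) \<and> l \<in> LieOp p}"
  then obtain z l where "s = tensor z l" "z \<in> RZ p" "l \<in> LieOp p" by blast
  then show "tact \<sigma> s \<in> fspan {tensor z l | z l. z \<in> (RZ p :: (nat \<Rightarrow> 'k) set) \<and> l \<in> LieOp p}"
    using tensor_in_ftensor[OF RZ_comp_permutes[OF \<sigma>] LieOp_relabel[OF \<sigma>]]
    by (simp add: tact_tensor ftensor_eq_span_tensor)
qed

lemma tact_diff_in_coinv_rel:
  assumes "\<sigma> permutes {1..p}" "t \<in> (ftensor (RZ p) (LieOp p) :: (nat \<times> nat list \<Rightarrow> 'k::field) set)"
  shows "tact \<sigma> t - t \<in> coinv_rel p"
  unfolding coinv_rel_def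
proof (rule fspan_base, rule UnI2, rule CollectI, intro exI conjI)
  show "tact \<sigma> t - t = (\<lambda>x. tact \<sigma> t x - t x)" by (simp add: fun_diff_def)
qed (fact assms)+

lemma RC_subset_RZ:
  assumes "(of_nat p :: 'k::field) = 0"
  shows "RC p \<subseteq> (RZ p :: (nat \<Rightarrow> 'k) set)"
proof
  fix z :: "nat \<Rightarrow> 'k" assume "z \<in> RC p"
  then obtain c where c: "\<And>i. z i = (if i \<in> {1..p} then c else 0)"
    by (auto simp: RC_def)
  then have "sum z {1..p} = of_nat p * c"
    by simp
  with c assms show "z \<in> RZ p"
    by (simp add: RZ_def)
qed

text \<open>This is where p = 0 in k enters: only then do the relations live inside RZ (x) Lie_p.\<close>

lemma coinv_rel_subset_ftensor:
  assumes "(of_nat p :: 'k::field) = 0"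
  shows "coinv_rel p \<subseteq> (ftensor (RZ p) (LieOp p) :: (nat \<times> nat list \<Rightarrow> 'k) set)"
proof -
  have "ftensor (RC p) (LieOp p) \<subseteq> (ftensor (RZ p) (LieOp p) :: (nat \<times> nat list \<Rightarrow> 'k) set)"
    unfolding ftensor_def by (rule fspan_mono) (use RC_subset_RZ[OF assms] in blast)
  moreover have "{(\<lambda>x. tact \<sigma> t x - t x) | \<sigma> t. \<sigma> permutes {1..p} \<and> t \<in> ftensor (RZ p) (LieOp p)}
      \<subseteq> (ftensor (RZ p) (LieOp p) :: (nat \<times> nat list \<Rightarrow> 'k) set)"
  proof (rule subsetI)
    fix x assume "x \<in> {(\<lambda>x. tact \<sigma> t x - t x) | \<sigma> t.
      \<sigma> permutes {1..p} \<and> t \<in> (ftensor (RZ p) (LieOp p) :: (nat \<times> nat list \<Rightarrow> 'k) set)}"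
    then obtain \<sigma> t where "x = tact \<sigma> t - t" "\<sigma> permutes {1..p}" "t \<in> ftensor (RZ p) (LieOp p)"
      by (auto simp: fun_diff_def)
    then show "x \<in> ftensor (RZ p) (LieOp p)"
      by (simp add: ftensor_diff tact_in_ftensor)
  qed
  ultimately have "fspan (ftensor (RC p) (LieOp p) \<union> {(\<lambda>x. tact \<sigma> t x - t x) | \<sigma> t.
      \<sigma> permutes {1..p} \<and> t \<in> ftensor (RZ p) (LieOp p)})
      \<subseteq> fspan (ftensor (RZ p) (LieOp p) :: (nat \<times> nat list \<Rightarrow> 'k) set)"
    by (intro fspan_mono Un_least)
  then show ?thesis
    unfolding coinv_rel_def fspan_ftensor .
qed

subsection \<open>An invariant functional\<close>

definition words :: "nat set \<Rightarrow> nat \<Rightarrow> nat list set" where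
  "words A n = {w. set w \<subseteq> A \<and> length w = n}"

lemma finite_words: "finite A \<Longrightarrow> finite (words A n)"
  unfolding words_def by (rule finite_lists_length_eq)

lemma bij_betw_map_words: "\<sigma> permutes A \<Longrightarrow> bij_betw (map \<sigma>) (words A n) (words A n)"
  by (rule bij_betw_byWitness[where f' = "map (inv \<sigma>)"])
    (auto simp: words_def permutes_inverses permutes_in_image permutes_inv map_idI subset_iff)

lemma sum_words_append:
  "(\<Sum>w\<in>words A (a + b). F w) = (\<Sum>u\<in>words A a. \<Sum>v\<in>words A b. F (u @ v))"
proof -
  have "bij_betw (\<lambda>(u, v). u @ v) (words A a \<times> words A b) (words A (a + b))"
  proof (rule bij_betw_byWitness[where f' = "\<lambda>w. (take a w, drop a w)"])
    show "(\<lambda>w. (take a w, drop a w)) ` words A (a + b) \<subseteq> words A a \<times> words A b"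
      by (auto simp: words_def dest: in_set_takeD in_set_dropD)
  qed (auto simp: words_def)
  then have "(\<Sum>w\<in>words A (a + b). F w) = (\<Sum>(u, v)\<in>words A a \<times> words A b. F (u @ v))"
    by (simp add: sum.reindex_bij_betw[symmetric] case_prod_beta')
  then show ?thesis
    by (simp add: sum.cartesian_product)
qed

lemma sum_words_wgen:
  assumes "x \<in> A" "finite A"
  shows "(\<Sum>v\<in>words A 1. wgen x v * K v) = (K [x] :: 'k::field)"
proof -
  have "(\<Sum>v\<in>words A 1. wgen x v * K v) = (\<Sum>v\<in>words A 1. if v = [x] then K [x] else 0)"
    by (rule sum.cong) (auto simp: wgen_def)
  also have "\<dots> = K [x]"
    using assms sum.delta[OF finite_words[OF assms(2), of 1], of "[x]" "\<lambda>_. K [x]"]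
    by (simp add: words_def)
  finally show ?thesis .
qed

lemma sum_wbracket_wgen:
  assumes A: "finite A" and x: "x \<in> A" and f: "homogeneous k f"
  shows "(\<Sum>w\<in>words A (k + 1). H w * wbracket f (wgen x) w) =
    (\<Sum>u\<in>words A k. H (u @ [x]) * f u) - (\<Sum>u\<in>words A k. H (x # u) * (f u :: 'k::field))"
proof -
  have split: "H w * wbracket f (wgen x) w
      = H w * f (take k w) * wgen x (drop k w) - H w * wgen x (take 1 w) * f (drop 1 w)"
    if "w \<in> words A (k + 1)" for w
    using that by (simp add: wbracket_def wmult_homogeneous_left[OF f]
        wmult_homogeneous_left[OF homogeneous_wgen] words_def algebra_simps)
  have "(\<Sum>w\<in>words A (k + 1). H w * f (take k w) * wgen x (drop k w))
      = (\<Sum>u\<in>words A k. \<Sum>v\<in>words A 1. H (u @ v) * f (take k (u @ v)) * wgen x (drop k (u @ v)))"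
    by (rule sum_words_append)
  also have "\<dots> = (\<Sum>u\<in>words A k. \<Sum>v\<in>words A 1. wgen x v * (H (u @ v) * f u))"
    by (intro sum.cong refl) (auto simp: words_def mult_ac)
  also have "\<dots> = (\<Sum>u\<in>words A k. H (u @ [x]) * f u)"
    by (intro sum.cong refl) (rule sum_words_wgen[OF x A])
  finally have right: "(\<Sum>w\<in>words A (k + 1). H w * f (take k w) * wgen x (drop k w))
      = (\<Sum>u\<in>words A k. H (u @ [x]) * f u)" .
  have "(\<Sum>w\<in>words A (1 + k). H w * wgen x (take 1 w) * f (drop 1 w))
      = (\<Sum>v\<in>words A 1. \<Sum>u\<in>words A k. H (v @ u) * wgen x (take 1 (v @ u)) * f (drop 1 (v @ u)))"
    by (rule sum_words_append)
  also have "\<dots> = (\<Sum>u\<in>words A k. \<Sum>v\<in>words A 1. wgen x v * (H (v @ u) * f u))"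
    by (subst sum.swap) (intro sum.cong refl, auto simp: words_def mult_ac)
  also have "\<dots> = (\<Sum>u\<in>words A k. H (x # u) * f u)"
    by (intro sum.cong refl) (subst sum_words_wgen[OF x A], simp)
  finally have left: "(\<Sum>w\<in>words A (k + 1). H w * wgen x (take 1 w) * f (drop 1 w))
      = (\<Sum>u\<in>words A k. H (x # u) * f u)"
    by (simp add: add.commute)
  show ?thesis
    using split right left by (simp add: sum_subtractf)
qed

text \<open>A bracket [f, x] has coefficient sum zero, the two products cancelling.\<close>

lemma sum_left_normed_eq_0:
  assumes "finite A" "2 \<le> length c" "set c \<subseteq> A"
  shows "(\<Sum>w\<in>words A (length c). left_normed c w) = (0 :: 'k::field)"
proof -
  obtain c' x where "c = c' @ [x]"
    using assms(2) by (cases c rule: rev_exhaust) auto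
  moreover from this assms(2) have "c' \<noteq> []" by auto
  ultimately have c: "c = c' @ [x]" "c' \<noteq> []" by auto
  then have "x \<in> A" using assms(3) by auto
  from sum_wbracket_wgen[OF assms(1) this homogeneous_left_normed[OF c(2)], of "\<lambda>_. 1"]
  have "(\<Sum>w\<in>words A (length c' + 1). wbracket (left_normed c' :: nat list \<Rightarrow> 'k) (wgen x) w) = 0"
    by simp
  with c show ?thesis by (simp add: left_normed_snoc)
qed

lemma sum_LieOp_eq_0:
  assumes "2 \<le> p" and l: "l \<in> (LieOp p :: (nat list \<Rightarrow> 'k::field) set)"
  shows "(\<Sum>w\<in>words {1..p} p. l w) = 0"
proof (rule linear_functional_eq_0_on_fspan[where \<phi> = "\<lambda>l. \<Sum>w\<in>words {1..p} p. l w"])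
  show "l \<in> fspan (left_normed_brackets {1..p})"
    using l by (simp add: LieOp_eq_span_left_normed)
  fix s :: "nat list \<Rightarrow> 'k" assume "s \<in> left_normed_brackets {1..p}"
  then obtain c where c: "s = left_normed c" "distinct c" "set c = {1..p}"
    by (rule left_normed_bracketsE)
  then have "length c = p"
    using distinct_card by fastforce
  with c assms(1) show "(\<Sum>w\<in>words {1..p} p. s w) = 0"
    using sum_left_normed_eq_0[of "{1..p}" c] by simp
qed (simp_all add: sum.distrib fscale_def sum_distrib_left)

lemma sum_left_normed_upt:
  assumes "1 \<le> k" "k \<le> p"
  shows "(\<Sum>w\<in>words {1..p} k. left_normed [1..<k + 1] w) = (if k = 1 then 1 else (0 :: 'k::field))"
proof (cases "k = 1")
  case True
  then show ?thesis
    using sum_words_wgen[of 1 "{1..p}" "\<lambda>_. 1 :: 'k"] assms by (simp add: left_normed_single)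
next
  case False
  have "set [1..<k + 1] \<subseteq> {1..p}" using assms(2) by auto
  with False assms(1) show ?thesis
    using sum_left_normed_eq_0[of "{1..p}" "[1..<k + 1]"] by (simp del: upt_Suc)
qed

text \<open>The coefficient sum of [..[x_1, x_2], .., x_k] restricted to words starting with i:
  only the words x_1 x_2 .. and x_2 x_1 .. contribute.\<close>

lemma sum_hd_left_normed_upt:
  assumes "1 \<le> k" "k \<le> p"
  shows "(\<Sum>w\<in>words {1..p} k. (if hd w = i then 1 else 0) * left_normed [1..<k + 1] w)
    = (if i = 1 then 1 else 0) - (if i = 2 \<and> 2 \<le> k then 1 else (0 :: 'k::field))"
  using assms
proof (induction k rule: nat_induct_at_least)
  case base
  show ?case
    using sum_words_wgen[of 1 "{1..p}" "\<lambda>w. if hd w = i then 1 else 0 :: 'k"] base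
    by (simp add: left_normed_single mult.commute)
next
  case (Suc k)
  let ?h = "\<lambda>w. if hd w = i then 1 else 0 :: 'k"
  have x: "Suc k \<in> {1..p}" using Suc.prems by simp
  have hom: "homogeneous k (left_normed [1..<k + 1] :: nat list \<Rightarrow> 'k)"
    using homogeneous_left_normed[of "[1..<k + 1]"] Suc.hyps by (simp del: upt_Suc)
  have snoc: "left_normed [1..<Suc k + 1] = wbracket (left_normed [1..<k + 1]) (wgen (Suc k) :: nat list \<Rightarrow> 'k)"
    using left_normed_snoc[of "[1..<k + 1]" "Suc k"] Suc.hyps by simp
  have "(\<Sum>w\<in>words {1..p} (Suc k). ?h w * left_normed [1..<Suc k + 1] w)
      = (\<Sum>u\<in>words {1..p} k. ?h (u @ [Suc k]) * left_normed [1..<k + 1] u)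
        - (\<Sum>u\<in>words {1..p} k. ?h (Suc k # u) * left_normed [1..<k + 1] u)"
    using sum_wbracket_wgen[OF _ x hom, of ?h] unfolding snoc by simp
  also have "(\<Sum>u\<in>words {1..p} k. ?h (u @ [Suc k]) * left_normed [1..<k + 1] u)
      = (\<Sum>u\<in>words {1..p} k. ?h u * left_normed [1..<k + 1] u)"
    by (rule sum.cong) (use Suc.hyps in \<open>auto simp: words_def hd_append\<close>)
  also have "(\<Sum>u\<in>words {1..p} k. ?h (Suc k # u) * left_normed [1..<k + 1] u)
      = (if Suc k = i then 1 else 0) * (\<Sum>u\<in>words {1..p} k. left_normed [1..<k + 1] u)"
    by (simp add: sum_distrib_left del: upt_Suc)
  also have "(\<Sum>u\<in>words {1..p} k. left_normed [1..<k + 1] u) = (if k = 1 then 1 else 0 :: 'k)"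
    using Suc.prems by (intro sum_left_normed_upt Suc.hyps) simp
  finally show ?case
    using Suc.IH Suc.prems by auto
qed

definition head_sum :: "nat \<Rightarrow> (nat \<times> nat list \<Rightarrow> 'k::field) \<Rightarrow> 'k" where
  "head_sum p t = (\<Sum>w\<in>words {1..p} p. t (hd w, w))"

lemma head_sum_add: "head_sum p (s + t) = head_sum p s + head_sum p t"
  by (simp add: head_sum_def sum.distrib)

lemma head_sum_scale: "head_sum p (fscale c t) = c * head_sum p t"
  by (simp add: head_sum_def fscale_def sum_distrib_left)

lemma head_sum_tact:
  assumes \<sigma>: "\<sigma> permutes {1..p}" and "1 \<le> p"
  shows "head_sum p (tact \<sigma> t) = head_sum p t"
proof -
  have "head_sum p (tact \<sigma> t) = (\<Sum>w\<in>words {1..p} p. (\<lambda>w. t (hd w, w)) (map \<sigma> w))"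
    unfolding head_sum_def tact_def
  proof (rule sum.cong)
    fix w assume "w \<in> words {1..p} p"
    with \<open>1 \<le> p\<close> have "w \<noteq> []" by (auto simp: words_def)
    then show "(case (hd w, w) of (i, w) \<Rightarrow> t (\<sigma> i, map \<sigma> w)) = (\<lambda>w. t (hd w, w)) (map \<sigma> w)"
      by (simp add: hd_map)
  qed simp
  also have "\<dots> = head_sum p t"
    unfolding head_sum_def by (rule sum.reindex_bij_betw[OF bij_betw_map_words[OF \<sigma>]])
  finally show ?thesis .
qed

lemma head_sum_tensor_RC:
  assumes "z \<in> RC p" "l \<in> (LieOp p :: (nat list \<Rightarrow> 'k::field) set)" "2 \<le> p"
  shows "head_sum p (tensor z l) = 0"
proof -
  obtain c where c: "\<And>i. z i = (if i \<in> {1..p} then c else 0)"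
    using assms(1) by (auto simp: RC_def)
  have "head_sum p (tensor z l) = (\<Sum>w\<in>words {1..p} p. c * l w)"
    unfolding head_sum_def tensor_def
  proof (rule sum.cong)
    fix w assume "w \<in> words {1..p} p"
    with assms(3) have "hd w \<in> {1..p}" by (cases w) (auto simp: words_def)
    then show "(case (hd w, w) of (i, w) \<Rightarrow> z i * l w) = c * l w" by (simp add: c)
  qed simp
  also have "\<dots> = 0"
    using sum_LieOp_eq_0[OF assms(3,2)] by (simp add: sum_distrib_left[symmetric])
  finally show ?thesis .
qed

lemma head_sum_coinv_rel:
  assumes "2 \<le> p" and t: "t \<in> (coinv_rel p :: (nat \<times> nat list \<Rightarrow> 'k::field) set)"
  shows "head_sum p t = 0"
proof (rule linear_functional_eq_0_on_fspan[OF head_sum_add head_sum_scale t[unfolded coinv_rel_def]])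
  fix s assume "s \<in> ftensor (RC p) (LieOp p) \<union> {(\<lambda>x. tact \<sigma> t x - t x) | \<sigma> t.
    \<sigma> permutes {1..p} \<and> t \<in> (ftensor (RZ p) (LieOp p) :: (nat \<times> nat list \<Rightarrow> 'k) set)}"
  then consider "s \<in> fspan {tensor z l | z l. z \<in> RC p \<and> l \<in> (LieOp p :: (nat list \<Rightarrow> 'k) set)}"
    | \<sigma> t where "s = tact \<sigma> t - t" "\<sigma> permutes {1..p}"
    by (auto simp: ftensor_eq_span_tensor fun_diff_def)
  then show "head_sum p s = 0"
  proof cases
    case 1
    then show ?thesis
      by (rule linear_functional_eq_0_on_fspan[OF head_sum_add head_sum_scale])
        (use head_sum_tensor_RC assms(1) in blast)
  next
    case 2
    then have "head_sum p s = head_sum p (tact \<sigma> t) - head_sum p t"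
      by (simp add: head_sum_def sum_subtractf)
    with 2 assms(1) show ?thesis
      using head_sum_tact[OF 2(2), of t] by simp
  qed
qed

definition e12 :: "nat \<Rightarrow> 'k::field" where
  "e12 i = (if i = 1 then 1 else 0) - (if i = 2 then 1 else 0)"

lemma head_sum_tensor_e12:
  assumes "2 \<le> p"
  shows "head_sum p (tensor e12 (left_normed [1..<p + 1])) = (2 :: 'k::field)"
proof -
  have "head_sum p (tensor e12 (left_normed [1..<p + 1])) =
      (\<Sum>w\<in>words {1..p} p. (if hd w = 1 then 1 else 0) * (left_normed [1..<p + 1] w :: 'k)) -
      (\<Sum>w\<in>words {1..p} p. (if hd w = 2 then 1 else 0) * left_normed [1..<p + 1] w)"
    unfolding head_sum_def tensor_def e12_def by (simp add: sum_subtractf algebra_simps)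
  then show ?thesis
    using sum_hd_left_normed_upt[where 'k = 'k, of p p 1] sum_hd_left_normed_upt[where 'k = 'k, of p p 2] assms
    by (simp del: upt_Suc)
qed

subsection \<open>Spanning modulo the relations\<close>

lemma obtain_permutes_map_upt:
  assumes "distinct c" "set c = {1..p}"
  obtains \<sigma> where "\<sigma> permutes {1..p}" "map \<sigma> [1..<p + 1] = c"
proof
  have len: "length c = p"
    using distinct_card[OF assms(1)] assms(2) by simp
  define \<sigma> where "\<sigma> k = (if k \<in> {1..p} then c ! (k - 1) else k)" for k
  have "inj_on \<sigma> {1..p}"
    by (rule inj_onI) (use assms(1) len in \<open>auto simp: \<sigma>_def nth_eq_iff_index_eq\<close>)
  moreover have "c ! (k - 1) \<in> {1..p}" if "k \<in> {1..p}" for k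
    using that len assms(2) nth_mem[of "k - 1" c] by auto
  then have "\<sigma> ` {1..p} \<subseteq> {1..p}"
    by (auto simp: \<sigma>_def)
  ultimately have "bij_betw \<sigma> {1..p} {1..p}"
    by (simp add: bij_betw_def endo_inj_surj)
  then show "\<sigma> permutes {1..p}"
    by (rule bij_imp_permutes) (auto simp: \<sigma>_def)
  show "map \<sigma> [1..<p + 1] = c"
    by (rule nth_equalityI) (simp_all add: len \<sigma>_def del: upt_Suc)
qed

text \<open>The step that needs 2 to be invertible: z = ((z_1 - z_2)/2) e_12 + 2h with h_1 = h_2,
  and the transposition (1 2) fixes h but negates the standard bracket, so
  2 h (x) b = h (x) b - tact (1 2) (h (x) b) is a relation.\<close>

lemma tensor_upt_in_span:
  assumes p: "2 \<le> p" and two: "(2 :: 'k::field) \<noteq> 0" and z: "z \<in> (RZ p :: (nat \<Rightarrow> 'k) set)"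
  shows "tensor z (left_normed [1..<p + 1])
    \<in> fspan (insert (tensor e12 (left_normed [1..<p + 1])) (coinv_rel p))"
proof -
  define b :: "nat list \<Rightarrow> 'k" where "b = left_normed [1..<p + 1]"
  define \<alpha> where "\<alpha> = (z 1 - z 2) / 2"
  define h where "h i = (z i - \<alpha> * e12 i) / 2" for i
  define s where "s = Transposition.transpose (1 :: nat) 2"
  have "sum e12 {1..p} = (0 :: 'k)"
    using p by (simp add: e12_def sum_subtractf)
  then have "h \<in> RZ p"
    using z p by (auto simp: RZ_def h_def e12_def sum_subtractf sum_divide_distrib[symmetric]
        sum_distrib_left[symmetric])
  moreover have "b \<in> LieOp p"
    unfolding b_def using p by (intro left_normed_in_LieOp) auto
  ultimately have hb: "tensor h b \<in> ftensor (RZ p) (LieOp p)"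
    by (rule tensor_in_ftensor)
  have s: "s permutes {1..p}"
    unfolding s_def using p by (intro permutes_swap_id) auto
  have "h 1 = h 2"
    using two by (simp add: h_def \<alpha>_def e12_def field_simps)
  then have hs: "h \<circ> s = h"
    by (auto simp: fun_eq_iff s_def transpose_def)
  have upt: "[1..<p + 1] = 1 # 2 # [3..<p + 1]"
    using p by (simp add: upt_conv_Cons numeral_3_eq_3 del: upt_Suc)
  have "map s [3..<p + 1] = [3..<p + 1]"
    by (rule map_idI) (auto simp: s_def)
  then have "map s (2 # 1 # [3..<p + 1]) = [1..<p + 1]"
    unfolding upt by (simp add: s_def del: upt_Suc)
  then have "(\<lambda>w. b (map s w)) = left_normed (2 # 1 # [3..<p + 1])"
    using left_normed_map[OF permutes_inj[OF s], of "2 # 1 # [3..<p + 1]"] by (simp add: b_def)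
  also have "\<dots> = - b"
    unfolding b_def upt by (rule left_normed_swap)
  finally have "tact s (tensor h b) = - tensor h b"
    by (simp add: tact_tensor hs tensor_uminus_right)
  then have rel: "- 2 * tensor h b \<in> coinv_rel p"
    using tact_diff_in_coinv_rel[OF s hb] by (simp add: algebra_simps)
  have "tensor z b = fscale \<alpha> (tensor e12 b) + fscale (- 1) (- 2 * tensor h b)"
    using two by (auto simp: fun_eq_iff tensor_def fscale_def h_def field_simps)
  moreover have "fscale \<alpha> (tensor e12 b) \<in> fspan (insert (tensor e12 b) (coinv_rel p))"
    by (intro fspan_scale fspan_base) simp
  moreover have "fscale (- 1) (- 2 * tensor h b) \<in> fspan (insert (tensor e12 b) (coinv_rel p))"
    using rel by (intro fspan_scale fspan_base) simp
  ultimately show ?thesis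
    unfolding b_def by (metis fspan_add)
qed

lemma tensor_left_normed_in_span:
  assumes p: "2 \<le> p" and two: "(2 :: 'k::field) \<noteq> 0" and z: "z \<in> (RZ p :: (nat \<Rightarrow> 'k) set)"
    and c: "distinct c" "set c = {1..p}"
  shows "tensor z (left_normed c) \<in> fspan (insert (tensor e12 (left_normed [1..<p + 1])) (coinv_rel p))"
proof -
  obtain \<sigma> where \<sigma>: "\<sigma> permutes {1..p}" and c_eq: "map \<sigma> [1..<p + 1] = c"
    using obtain_permutes_map_upt[OF c] .
  define t where "t = tensor z (left_normed c)"
  have "t \<in> ftensor (RZ p) (LieOp p)"
    unfolding t_def using z c p by (intro tensor_in_ftensor left_normed_in_LieOp) auto
  then have rel: "tact \<sigma> t - t \<in> coinv_rel p"
    by (rule tact_diff_in_coinv_rel[OF \<sigma>])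
  have "(\<lambda>w. left_normed c (map \<sigma> w)) = (left_normed [1..<p + 1] :: nat list \<Rightarrow> 'k)"
    using left_normed_map[OF permutes_inj[OF \<sigma>], of "[1..<p + 1]"] p c_eq by (simp del: upt_Suc)
  then have "tact \<sigma> t = tensor (z \<circ> \<sigma>) (left_normed [1..<p + 1])"
    by (simp add: t_def tact_tensor)
  then have "tact \<sigma> t \<in> fspan (insert (tensor e12 (left_normed [1..<p + 1])) (coinv_rel p))"
    using tensor_upt_in_span[OF p two RZ_comp_permutes[OF \<sigma> z]] by simp
  moreover have "tact \<sigma> t - t \<in> fspan (insert (tensor e12 (left_normed [1..<p + 1])) (coinv_rel p))"
    using rel by (intro fspan_base) simp
  ultimately have "tact \<sigma> t - (tact \<sigma> t - t)
      \<in> fspan (insert (tensor e12 (left_normed [1..<p + 1])) (coinv_rel p))"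
    by (rule fspan_diff)
  then show ?thesis
    by (simp add: t_def)
qed

lemma ftensor_subset_span_insert:
  assumes p: "2 \<le> p" and two: "(2 :: 'k::field) \<noteq> 0"
  shows "(ftensor (RZ p) (LieOp p) :: (nat \<times> nat list \<Rightarrow> 'k) set)
    \<subseteq> fspan (insert (tensor e12 (left_normed [1..<p + 1])) (coinv_rel p))"
  unfolding ftensor_eq_span_tensor
proof (rule fspan_minimal, rule subsetI)
  fix x assume "x \<in> {tensor z l | z l. z \<in> (RZ p :: (nat \<Rightarrow> 'k) set) \<and> l \<in> LieOp p}"
  then obtain z l where x: "x = tensor z l" "z \<in> RZ p" "l \<in> (LieOp p :: (nat list \<Rightarrow> 'k) set)"
    by blast
  have "l \<in> fspan (left_normed_brackets {1..p})"
    using x(3) by (simp add: LieOp_eq_span_left_normed)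
  then show "x \<in> fspan (insert (tensor e12 (left_normed [1..<p + 1])) (coinv_rel p))"
    unfolding x(1)
  proof (rule fspan_linear_image[OF tensor_add_right tensor_scale_right])
    fix s :: "nat list \<Rightarrow> 'k" assume "s \<in> left_normed_brackets {1..p}"
    then show "tensor z s \<in> fspan (insert (tensor e12 (left_normed [1..<p + 1])) (coinv_rel p))"
      using tensor_left_normed_in_span[OF p two x(2)] by (auto elim: left_normed_bracketsE)
  qed
qed

lemma LieOp_vanishes_outside:
  assumes l: "l \<in> (LieOp p :: (nat list \<Rightarrow> 'k::field) set)" and w: "w \<notin> words {1..p} p"
  shows "l w = 0"
proof (rule fspan_vanishes_outside[OF _ _ w])
  show "l \<in> fspan (left_normed_brackets {1..p})"
    using l by (simp add: LieOp_eq_span_left_normed)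
  fix s :: "nat list \<Rightarrow> 'k" and u assume s: "s \<in> left_normed_brackets {1..p}" and u: "u \<notin> words {1..p} p"
  from s obtain c where c: "s = left_normed c" "c \<noteq> []" "distinct c" "set c = {1..p}"
    by (rule left_normed_bracketsE)
  then have "length c = p"
    using distinct_card by fastforce
  with c have "homogeneous p s" "letters_in {1..p} s"
    using homogeneous_left_normed[of c] letters_in_left_normed[of c "{1..p}"] by auto
  with u show "s u = 0"
    unfolding homogeneous_def letters_in_def words_def by blast
qed

lemma ftensor_vanishes_outside:
  assumes t: "t \<in> (ftensor (RZ p) (LieOp p) :: (nat \<times> nat list \<Rightarrow> 'k::field) set)"
    and y: "y \<notin> {1..p} \<times> words {1..p} p"
  shows "t y = 0"
proof (rule fspan_vanishes_outside[OF _ _ y])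
  show "t \<in> fspan {tensor z l | z l. z \<in> RZ p \<and> l \<in> (LieOp p :: (nat list \<Rightarrow> 'k) set)}"
    using t by (simp add: ftensor_eq_span_tensor)
  fix s y assume "s \<in> {tensor z l | z l. z \<in> RZ p \<and> l \<in> (LieOp p :: (nat list \<Rightarrow> 'k) set)}"
    and y: "y \<notin> {1..p} \<times> words {1..p} p"
  then obtain z l where zl: "s = tensor z l" "z \<in> RZ p" "l \<in> (LieOp p :: (nat list \<Rightarrow> 'k) set)"
    by blast
  obtain i w where "y = (i, w)" "i \<notin> {1..p} \<or> w \<notin> words {1..p} p"
    using y by (cases y) auto
  with zl show "s y = 0"
    using LieOp_vanishes_outside[OF zl(3)] by (auto simp: tensor_def RZ_def)
qed

lemma tensor_e12_in_ftensor:
  assumes "2 \<le> p"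
  shows "(tensor e12 (left_normed [1..<p + 1]) :: nat \<times> nat list \<Rightarrow> 'k::field) \<in> ftensor (RZ p) (LieOp p)"
  using assms by (intro tensor_in_ftensor left_normed_in_LieOp) (auto simp: RZ_def e12_def sum_subtractf)

lemma tensor_e12_notin_span_coinv_rel:
  assumes p: "2 \<le> p" and two: "(2 :: 'k::field) \<noteq> 0"
  shows "(tensor e12 (left_normed [1..<p + 1]) :: nat \<times> nat list \<Rightarrow> 'k) \<notin> fv.span (coinv_rel p)"
proof
  assume "tensor e12 (left_normed [1..<p + 1]) \<in> fv.span (coinv_rel p :: (nat \<times> nat list \<Rightarrow> 'k) set)"
  then have "tensor e12 (left_normed [1..<p + 1]) \<in> (coinv_rel p :: (nat \<times> nat list \<Rightarrow> 'k) set)"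
    by (simp add: coinv_rel_def fspan_def fv.span_span)
  then have "head_sum p (tensor e12 (left_normed [1..<p + 1]) :: nat \<times> nat list \<Rightarrow> 'k) = 0"
    by (rule head_sum_coinv_rel[OF p])
  with head_sum_tensor_e12[where 'k = 'k, OF p] two show False
    by simp
qed

lemma ftensor_subset_span_indicators:
  "(ftensor (RZ p) (LieOp p) :: (nat \<times> nat list \<Rightarrow> 'k::field) set)
    \<subseteq> fv.span ((\<lambda>y. indicator {y}) ` ({1..p} \<times> words {1..p} p))"
  using ftensor_vanishes_outside unfolding fspan_eq_span[symmetric]
  by (blast intro: finite_support_in_fspan finite_words)

theorem lemma6p1:
  fixes p :: nat
  assumes "alg_closed TYPE('k::field)"
    and "CHAR('k) = p"
    and "p \<ge> 3"
  shows "coinv_rel p \<subseteq> (ftensor (RZ p) (LieOp p) :: (nat \<times> nat list \<Rightarrow> 'k) set)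
         \<and> coinv_dim TYPE('k) p = 1"
proof -
  have p: "2 \<le> p" using assms(3) by simp
  have "(of_nat p :: 'k) = 0" using assms(2) by (simp add: of_nat_eq_0_iff_char_dvd)
  then have rel: "coinv_rel p \<subseteq> (ftensor (RZ p) (LieOp p) :: (nat \<times> nat list \<Rightarrow> 'k) set)"
    (is "?W \<subseteq> ?V") by (rule coinv_rel_subset_ftensor)
  have two: "(2 :: 'k) \<noteq> 0"
    using assms(2,3) of_nat_eq_0_iff_char_dvd[of 2, where 'a = 'k] by (auto dest: dvd_imp_le)
  have "fv.dim ?V = Suc (fv.dim ?W)"
    using ftensor_subset_span_indicators rel tensor_e12_in_ftensor[OF p]
      tensor_e12_notin_span_coinv_rel[OF p two] ftensor_subset_span_insert[OF p two]
    by (intro fv.dim_eq_Suc_dim_if_span_insert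
        [where F = "(\<lambda>y. indicator {y}) ` ({1..p} \<times> words {1..p} p)"])
      (simp_all add: finite_words fspan_eq_span)
  with rel show ?thesis
    by (simp add: coinv_dim_def fdim_def)
qed

end
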